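(* Let $\alpha>-1$, $n\ge1$ an integer, and $L_n^{(\alpha)}(x)=\binom{n+\alpha}{n}\,{}_1F_1\!\left(\begin{matrix}-n\\ \alpha+1\end{matrix};x\right)$ the classical Laguerre polynomial. Define for $i=0,1,2,\ldots$ $$b_i^*(\alpha,x)=\frac{1}{i!}\sum_{j=0}^i(-1)^j\binom{i}{j}(\alpha+1)_{i-j}x^j,\qquad c_i^*(\alpha,x)=\frac{(-1)^i}{i!}x^i .$$ Then, with $D=d/dx$, for $k=0,1,2$: $$\sum_{i=0}^\infty b_i^*(\alpha,x)D^{i+k}L_n^{(\alpha)}(x)=\frac{(-n)_k}{n\,\Gamma(k)}\quad(\text{i.e. }0,\,-1,\,n-1\text{ for }k=0,1,2),$$ and $$\sum_{i=0}^\infty c_i^*(\alpha,x)D^{i+k}L_n^{(\alpha)}(x)=\binom{n+\alpha}{n}\frac{(-n)_k}{(\alpha+1)_k}.$$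
   Context: $(a)_k$ is the Pochhammer symbol ($(a)_0=1$, $(a)_k=a(a+1)\cdots(a+k-1)$), $\binom{\gamma}{m}$ the generalized binomial coefficient, ${}_1F_1$ the confluent hypergeometric series $\sum_k\frac{(a)_k}{(b)_k}\frac{z^k}{k!}$. $1/\Gamma(0)$ is interpreted as $0$. The sums are finite since $L_n^{(\alpha)}$ is a polynomial of degree $n$. *)

theory Defs
  imports "HOL-Analysis.Analysis" "HOL-Computational_Algebra.Polynomial"
begin

text \<open>Terms of the confluent hypergeometric series 1F1(a;b;z) = sum_k (a)_k/(b)_k z^k/k!.
  For a = -n the terms with k > n vanish, so the series is the polynomial below.\<close>

definition laguerre_poly :: "nat \<Rightarrow> real \<Rightarrow> real poly" where
  "laguerre_poly n \<alpha> =
     smult ((real n + \<alpha>) gchoose n)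
       (\<Sum>k\<le>n. monom (pochhammer (- real n) k / (pochhammer (\<alpha> + 1) k * fact k)) k)"

definition b_star :: "nat \<Rightarrow> real \<Rightarrow> real \<Rightarrow> real" where
  "b_star i \<alpha> x = (1 / fact i) *
     (\<Sum>j\<le>i. (-1) ^ j * real (i choose j) * pochhammer (\<alpha> + 1) (i - j) * x ^ j)"

definition c_star :: "nat \<Rightarrow> real \<Rightarrow> real \<Rightarrow> real" where
  "c_star i \<alpha> x = (-1) ^ i / fact i * x ^ i"

end

theory Submission
  imports Defs
begin

(* Write B_i(x) = (1/i!) sum_j (-1)^j (i choose j) (a)_(i-j) x^j, so that b*_i = B_i for a = alpha + 1
   and c*_i = B_i for a = 0.  Since B_0 = 1 and B_(i+1)' = -B_i, the derivative of sum_i B_i D^i p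
   telescopes to zero for every polynomial p: the sum is constant, equal to its value
   sum_i (a)_i [x^i] p at 0.  For p = D^k L_n^(alpha) and a = 0 only the constant term survives.
   For a = alpha + 1, splitting (-n)_(i+k) and (a)_(i+k) reduces the sum to the partial fraction
   identity sum_i (-1)^i (N choose i) / (a + i)_k = (k)_N / (a)_(N+k), which follows by induction
   on N from Pascal's rule.  The argument works for every k, not only for k <= 2. *)

lemma higher_pderiv_eq_0:
  fixes p :: "'a::{comm_semiring_1,semiring_no_zero_divisors,semiring_char_0} poly"
  assumes "degree p < m"
  shows "(pderiv ^^ m) p = 0"
proof -
  obtain l where m: "m = Suc l"
    using assms by (cases m) auto
  have "degree ((pderiv ^^ l) p) = 0"
    using assms m by (simp add: degree_higher_pderiv)
  then show ?thesis
    using m by (simp add: pderiv_eq_0_iff)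
qed

lemma poly_higher_pderiv_0: "poly ((pderiv ^^ j) p) 0 = fact j * coeff p j"
  by (simp add: poly_0_coeff_0 coeff_higher_pderiv pochhammer_fact)

definition b_poly :: "'a::field_char_0 \<Rightarrow> nat \<Rightarrow> 'a poly" where
  "b_poly a i = smult (1 / fact i)
     (\<Sum>j\<le>i. monom ((-1) ^ j * of_nat (i choose j) * pochhammer a (i - j)) j)"

lemma coeff_b_poly:
  "coeff (b_poly a i) j = (-1) ^ j * of_nat (i choose j) * pochhammer a (i - j) / fact i"
  by (simp add: b_poly_def coeff_sum coeff_monom)

lemma b_poly_0 [simp]: "b_poly a 0 = 1"
  by (simp add: b_poly_def)

lemma pderiv_b_poly_Suc: "pderiv (b_poly a (Suc i)) = - b_poly a i"
proof (rule poly_eqI)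
  fix j
  have "of_nat (Suc j) * of_nat (Suc i choose Suc j) = (of_nat (Suc i) * of_nat (i choose j) :: 'a)"
    by (metis Suc_times_binomial_eq mult.commute of_nat_mult)
  then show "coeff (pderiv (b_poly a (Suc i))) j = coeff (- b_poly a i) j"
    by (simp add: coeff_pderiv coeff_b_poly field_simps del: of_nat_Suc binomial_Suc_Suc)
qed

lemma poly_b_poly_0: "poly (b_poly a i) 0 = pochhammer a i / fact i"
  by (simp add: poly_0_coeff_0 coeff_b_poly)

lemma b_star_eq_poly_b_poly: "b_star i \<alpha> x = poly (b_poly (\<alpha> + 1) i) x"
  by (simp add: b_poly_def b_star_def poly_sum poly_monom sum_distrib_left)

lemma c_star_eq_poly_b_poly: "c_star i \<alpha> x = poly (b_poly 0 i) x"
proof -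
  have "(\<Sum>j\<le>i. (-1) ^ j * real (i choose j) * pochhammer 0 (i - j) * x ^ j) = (-1) ^ i * x ^ i"
    by (subst sum.remove[of _ i]) (auto simp: pochhammer_0_left intro!: sum.neutral)
  then show ?thesis
    by (simp add: b_poly_def c_star_def poly_sum poly_monom sum_distrib_left)
qed

lemma pderiv_sum_b_poly_higher_pderiv:
  "pderiv (\<Sum>i\<le>N. b_poly a i * (pderiv ^^ i) p) = b_poly a N * (pderiv ^^ Suc N) p"
proof (induction N)
  case 0
  then show ?case by (simp add: pderiv_mult)
next
  case (Suc N)
  then show ?case
    by (simp add: pderiv_add pderiv_mult pderiv_b_poly_Suc algebra_simps)
qed

lemma poly_sum_b_poly_higher_pderiv:
  fixes p :: "'a::field_char_0 poly"
  assumes "degree p \<le> N"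
  shows "poly (\<Sum>i\<le>N. b_poly a i * (pderiv ^^ i) p) x = (\<Sum>i\<le>N. pochhammer a i * coeff p i)"
proof -
  define G where "G = (\<Sum>i\<le>N. b_poly a i * (pderiv ^^ i) p)"
  have "(pderiv ^^ Suc N) p = 0"
    using assms by (intro higher_pderiv_eq_0) simp
  then have "pderiv G = 0"
    unfolding G_def pderiv_sum_b_poly_higher_pderiv by simp
  then obtain c where "G = [:c:]"
    by (metis degree_eq_zeroE pderiv_eq_0_iff)
  then have "poly G x = poly G 0"
    by simp
  then show ?thesis
    by (simp add: G_def poly_sum poly_b_poly_0 poly_higher_pderiv_0)
qed

lemma suminf_b_poly_higher_pderiv:
  fixes p :: "real poly"
  assumes "degree p \<le> N"
  shows "(\<Sum>i. poly (b_poly a i) x * poly ((pderiv ^^ i) p) x) = (\<Sum>i\<le>N. pochhammer a i * coeff p i)"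
proof -
  have "(\<Sum>i. poly (b_poly a i) x * poly ((pderiv ^^ i) p) x)
      = (\<Sum>i\<le>N. poly (b_poly a i) x * poly ((pderiv ^^ i) p) x)"
    by (rule suminf_finite) (use assms in \<open>auto simp: higher_pderiv_eq_0\<close>)
  then show ?thesis
    using poly_sum_b_poly_higher_pderiv[OF assms] by (simp add: poly_sum)
qed

lemma sum_alternating_binomial_Suc:
  fixes f :: "nat \<Rightarrow> 'a::comm_ring_1"
  shows "(\<Sum>i\<le>Suc N. (-1) ^ i * of_nat (Suc N choose i) * f i)
       = (\<Sum>i\<le>N. (-1) ^ i * of_nat (N choose i) * (f i - f (Suc i)))"
proof -
  let ?A = "\<Sum>i\<le>N. (-1) ^ Suc i * of_nat (N choose Suc i) * f (Suc i)"
  let ?B = "\<Sum>i\<le>N. (-1) ^ Suc i * of_nat (N choose i) * f (Suc i)"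
  have "(\<Sum>i\<le>Suc N. (-1) ^ i * of_nat (Suc N choose i) * f i)
      = f 0 + (\<Sum>i\<le>N. (-1) ^ Suc i * of_nat (Suc N choose Suc i) * f (Suc i))"
    by (subst sum.atMost_Suc_shift) simp
  also have "\<dots> = (f 0 + ?A) + ?B"
    by (simp only: binomial_Suc_Suc of_nat_add distrib_left distrib_right sum.distrib add_ac)
  also have "f 0 + ?A = (\<Sum>i\<le>Suc N. (-1) ^ i * of_nat (N choose i) * f i)"
    by (subst sum.atMost_Suc_shift) simp
  also have "\<dots> = (\<Sum>i\<le>N. (-1) ^ i * of_nat (N choose i) * f i)"
    by (simp add: binomial_eq_0)
  finally show ?thesis
    by (simp add: sum_subtractf sum_negf right_diff_distrib)
qed

lemma sum_alternating_binomial_div_pochhammer: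
  fixes a :: real
  assumes "a > 0"
  shows "(\<Sum>i\<le>N. (-1) ^ i * real (N choose i) / pochhammer (a + real i) k)
       = pochhammer (real k) N / pochhammer a (N + k)"
  using assms
proof (induction N arbitrary: a)
  case 0
  then show ?case by simp
next
  case (Suc N)
  have nz: "pochhammer a (N + k) \<noteq> 0" "pochhammer (a + 1) (N + k) \<noteq> 0"
    using Suc.prems by (auto simp: pochhammer_eq_0_iff)
  have "(\<Sum>i\<le>Suc N. (-1) ^ i * real (Suc N choose i) / pochhammer (a + real i) k)
      = (\<Sum>i\<le>N. (-1) ^ i * real (N choose i) / pochhammer (a + real i) k)
        - (\<Sum>i\<le>N. (-1) ^ i * real (N choose i) / pochhammer (a + 1 + real i) k)"
    using sum_alternating_binomial_Suc[of N "\<lambda>i. 1 / pochhammer (a + real i) k"]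
    by (simp add: sum_subtractf right_diff_distrib add_ac)
  also have "\<dots> = pochhammer (real k) N / pochhammer a (N + k)
                  - pochhammer (real k) N / pochhammer (a + 1) (N + k)"
    using Suc by simp
  also have "\<dots> = pochhammer (real k) (Suc N) / pochhammer a (Suc N + k)"
  proof -
    let ?K = "pochhammer (real k) N" and ?R = "pochhammer a (Suc N + k)"
    have "?K / pochhammer a (N + k) = ?K * (a + real (N + k)) / ?R"
      using nz(1) Suc.prems by (simp add: pochhammer_rec')
    moreover have "?K / pochhammer (a + 1) (N + k) = ?K * a / ?R"
      using nz(2) Suc.prems by (simp add: pochhammer_rec)
    ultimately show ?thesis
      by (simp add: pochhammer_rec' diff_divide_distrib[symmetric] algebra_simps)
  qed
  finally show ?case .
qed

lemma sum_pochhammer_quotient: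
  fixes a :: real
  assumes "a > 0"
  shows "(\<Sum>i\<le>n. pochhammer a i * pochhammer (- real n) (i + k) / (pochhammer a (i + k) * fact i))
       = pochhammer (- real n) k * pochhammer (real k) (n - k) / pochhammer a n"
proof (cases "k \<le> n")
  case False
  then show ?thesis
    by (simp add: pochhammer_of_nat_eq_0_lemma)
next
  case True
  have "pochhammer a i * pochhammer (- real n) (i + k) / (pochhammer a (i + k) * fact i)
      = pochhammer (- real n) k * ((-1) ^ i * real (n - k choose i) / pochhammer (a + real i) k)"
    for i
  proof -
    have "pochhammer (- real n) (i + k) = pochhammer (- real n) k * pochhammer (- real (n - k)) i"
      using pochhammer_product'[of "- real n" k i] True by (simp add: add.commute of_nat_diff)
    moreover have "pochhammer (- real (n - k)) i = (-1) ^ i * real (n - k choose i) * fact i"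
      by (simp add: binomial_gbinomial gbinomial_pochhammer)
    moreover have "pochhammer a (i + k) = pochhammer a i * pochhammer (a + real i) k"
      by (rule pochhammer_product')
    moreover have "pochhammer a i \<noteq> 0" "pochhammer (a + real i) k \<noteq> 0"
      using assms by (auto simp: pochhammer_eq_0_iff)
    ultimately show ?thesis
      by (simp add: field_simps)
  qed
  then have "(\<Sum>i\<le>n. pochhammer a i * pochhammer (- real n) (i + k) / (pochhammer a (i + k) * fact i))
      = pochhammer (- real n) k * (\<Sum>i\<le>n. (-1) ^ i * real (n - k choose i) / pochhammer (a + real i) k)"
    by (simp add: sum_distrib_left)
  also have "(\<Sum>i\<le>n. (-1) ^ i * real (n - k choose i) / pochhammer (a + real i) k)
      = (\<Sum>i\<le>n - k. (-1) ^ i * real (n - k choose i) / pochhammer (a + real i) k)"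
    by (rule sum.mono_neutral_right) (auto simp: binomial_eq_0)
  also have "\<dots> = pochhammer (real k) (n - k) / pochhammer a n"
    using True by (simp add: sum_alternating_binomial_div_pochhammer assms)
  finally show ?thesis
    by simp
qed

lemma pochhammer_of_nat_eq_fact_rGamma:
  assumes "k \<le> n" "n \<ge> 1"
  shows "pochhammer (real k) (n - k) = fact (n - 1) * rGamma (real k)"
proof (cases k)
  case 0
  then show ?thesis
    using assms by (simp add: pochhammer_0_left)
next
  case (Suc m)
  have "fact (n - 1) = fact m * pochhammer (real k) (n - k)"
    using pochhammer_product[of m "n - 1" "1::real"] Suc assms
    by (simp add: pochhammer_fact add.commute)
  moreover have "rGamma (real k) = inverse (fact m)"
    using Gamma_fact[of m] Suc by (simp add: rGamma_inverse_Gamma add.commute)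
  ultimately show ?thesis
    by simp
qed

lemma coeff_laguerre_poly:
  "coeff (laguerre_poly n \<alpha>) j
     = ((real n + \<alpha>) gchoose n) * (pochhammer (- real n) j / (pochhammer (\<alpha> + 1) j * fact j))"
  by (cases "j \<le> n")
     (simp_all add: laguerre_poly_def coeff_sum coeff_monom pochhammer_of_nat_eq_0_iff)

lemma degree_laguerre_poly: "degree (laguerre_poly n \<alpha>) \<le> n"
  by (rule degree_le) (simp add: coeff_laguerre_poly pochhammer_of_nat_eq_0_iff)

lemma coeff_higher_pderiv_laguerre_poly:
  "coeff ((pderiv ^^ k) (laguerre_poly n \<alpha>)) i
     = ((real n + \<alpha>) gchoose n) * pochhammer (- real n) (i + k) / (pochhammer (\<alpha> + 1) (i + k) * fact i)"
proof -
  have "fact (i + k) = fact i * pochhammer (real (Suc i)) k"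
    using pochhammer_product'[of 1 i k] by (simp add: pochhammer_fact add.commute)
  moreover have "pochhammer (real (Suc i)) k \<noteq> 0"
    by (simp add: pochhammer_eq_0_iff)
  ultimately show ?thesis
    by (cases "pochhammer (\<alpha> + 1) (i + k) = 0") (simp_all add: coeff_higher_pderiv coeff_laguerre_poly)
qed

lemma suminf_b_poly_laguerre_poly:
  "(\<Sum>i. poly (b_poly a i) x * poly ((pderiv ^^ (i + k)) (laguerre_poly n \<alpha>)) x)
     = ((real n + \<alpha>) gchoose n) *
       (\<Sum>i\<le>n. pochhammer a i * pochhammer (- real n) (i + k) / (pochhammer (\<alpha> + 1) (i + k) * fact i))"
proof -
  have "degree ((pderiv ^^ k) (laguerre_poly n \<alpha>)) \<le> n"
    using degree_laguerre_poly[of n \<alpha>] by (simp add: degree_higher_pderiv)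
  from suminf_b_poly_higher_pderiv[OF this] show ?thesis
    by (simp add: funpow_add coeff_higher_pderiv_laguerre_poly sum_distrib_left mult_ac)
qed

theorem mainTheorem2:
  fixes \<alpha> x :: real and n k :: nat
  assumes "\<alpha> > -1" and "n \<ge> 1" and "k \<le> 2"
  shows "(\<Sum>i. b_star i \<alpha> x * poly ((pderiv ^^ (i + k)) (laguerre_poly n \<alpha>)) x)
           = pochhammer (- real n) k * rGamma (real k) / real n
         \<and> (\<Sum>i. c_star i \<alpha> x * poly ((pderiv ^^ (i + k)) (laguerre_poly n \<alpha>)) x)
           = ((real n + \<alpha>) gchoose n) * pochhammer (- real n) k / pochhammer (\<alpha> + 1) k"
proof -
  have pos: "\<alpha> + 1 > 0"
    using assms(1) by simp
  have "(\<Sum>i. b_star i \<alpha> x * poly ((pderiv ^^ (i + k)) (laguerre_poly n \<alpha>)) x)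
      = ((real n + \<alpha>) gchoose n) * (pochhammer (- real n) k * pochhammer (real k) (n - k) / pochhammer (\<alpha> + 1) n)"
    by (simp add: b_star_eq_poly_b_poly suminf_b_poly_laguerre_poly sum_pochhammer_quotient[OF pos])
  also have "\<dots> = pochhammer (- real n) k * pochhammer (real k) (n - k) / fact n"
    using pos by (simp add: gbinomial_pochhammer' pochhammer_eq_0_iff add_ac)
  also have "\<dots> = pochhammer (- real n) k * rGamma (real k) / real n"
  proof (cases "k \<le> n")
    case True
    then show ?thesis
      using assms(2) by (simp add: pochhammer_of_nat_eq_fact_rGamma fact_reduce[of n])
  qed (simp add: pochhammer_of_nat_eq_0_lemma)
  moreover have "(\<Sum>i. c_star i \<alpha> x * poly ((pderiv ^^ (i + k)) (laguerre_poly n \<alpha>)) x)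
      = ((real n + \<alpha>) gchoose n) * pochhammer (- real n) k / pochhammer (\<alpha> + 1) k"
    by (simp add: c_star_eq_poly_b_poly suminf_b_poly_laguerre_poly pochhammer_0_left sum.atMost_shift)
  ultimately show ?thesis
    by simp
qed

end
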